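(* Let $K$ be a perfect field with $\mathrm{char}(K)\neq 2$ and algebraic closure $K_a$. Let $f(t)\in K[t]$ be a separable irreducible polynomial of degree $7$ whose Galois group $\mathrm{Gal}(f)$ is either $\mathbf{S}_7$ or $\mathbf{A}_7$, and let $\mathfrak{R}_f\subset K_a$ be its set of $7$ roots. Then the $7$-element set $B_f=\{(\alpha^3:\alpha:1)\mid \alpha\in\mathfrak{R}_f\}\subset\mathbb{P}^2(K_a)$ is in general position, i.e. no three of its points lie on a line and no six of its points lie on a conic. *)

theory Defs
  imports "HOL-Computational_Algebra.Polynomial" "HOL-Combinatorics.Permutations"
begin

text \<open>The ambient type 'a plays the role of the algebraic closure K_a; the field K is a
  subfield K \<subseteq> UNIV over which 'a is algebraic.\<close>

definition is_subfield :: "'a::field set \<Rightarrow> bool" where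
  "is_subfield K \<longleftrightarrow> 0 \<in> K \<and> 1 \<in> K \<and>
     (\<forall>x\<in>K. \<forall>y\<in>K. x + y \<in> K \<and> x * y \<in> K) \<and>
     (\<forall>x\<in>K. - x \<in> K) \<and> (\<forall>x\<in>K. x \<noteq> 0 \<longrightarrow> inverse x \<in> K)"

definition poly_over :: "'a::field set \<Rightarrow> 'a poly \<Rightarrow> bool" where
  "poly_over K p \<longleftrightarrow> (\<forall>i. coeff p i \<in> K)"

definition algebraic_over :: "'a::field set \<Rightarrow> bool" where
  "algebraic_over K \<longleftrightarrow> (\<forall>x::'a. \<exists>p. p \<noteq> 0 \<and> poly_over K p \<and> poly p x = 0)"

definition perfect_subfield :: "'a::field set \<Rightarrow> bool" where
  "perfect_subfield K \<longleftrightarrow> CHAR('a) = 0 \<or> (\<forall>x\<in>K. \<exists>y\<in>K. y ^ CHAR('a) = x)"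

definition irreducible_over :: "'a::field set \<Rightarrow> 'a poly \<Rightarrow> bool" where
  "irreducible_over K f \<longleftrightarrow> poly_over K f \<and> degree f > 0 \<and>
     (\<forall>g h. poly_over K g \<and> poly_over K h \<and> f = g * h \<longrightarrow> degree g = 0 \<or> degree h = 0)"

definition separable_poly :: "'a::field poly \<Rightarrow> bool" where
  "separable_poly f \<longleftrightarrow> coprime f (pderiv f)"

definition field_aut :: "('a::field \<Rightarrow> 'a) \<Rightarrow> bool" where
  "field_aut \<sigma> \<longleftrightarrow> bij \<sigma> \<and> \<sigma> 1 = 1 \<and>
     (\<forall>x y. \<sigma> (x + y) = \<sigma> x + \<sigma> y) \<and> (\<forall>x y. \<sigma> (x * y) = \<sigma> x * \<sigma> y)"

definition root_set :: "'a::field poly \<Rightarrow> 'a set" where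
  "root_set f = {x. poly f x = 0}"

text \<open>Galois group of f over K, as the group of permutations of the roots of f induced by
  the automorphisms of K_a fixing K pointwise (extended by the identity off the roots).\<close>
definition gal_group :: "'a::field set \<Rightarrow> 'a poly \<Rightarrow> ('a \<Rightarrow> 'a) set" where
  "gal_group K f = {(\<lambda>x. if x \<in> root_set f then \<sigma> x else x) | \<sigma>.
                      field_aut \<sigma> \<and> (\<forall>c\<in>K. \<sigma> c = c)}"

text \<open>Points of P^2(K_a) are given by nonzero representative triples (x,y,z).\<close>
definition on_line :: "'a::field \<times> 'a \<times> 'a \<Rightarrow> 'a \<times> 'a \<times> 'a \<Rightarrow> bool" where
  "on_line l p = (case l of (a, b, c) \<Rightarrow> case p of (x, y, z) \<Rightarrow> a * x + b * y + c * z = 0)"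

definition on_conic :: "'a::field \<times> 'a \<times> 'a \<times> 'a \<times> 'a \<times> 'a \<Rightarrow> 'a \<times> 'a \<times> 'a \<Rightarrow> bool" where
  "on_conic q p = (case q of (c1, c2, c3, c4, c5, c6) \<Rightarrow> case p of (x, y, z) \<Rightarrow>
      c1 * x^2 + c2 * y^2 + c3 * z^2 + c4 * x * y + c5 * x * z + c6 * y * z = 0)"

text \<open>General position for a set B of representatives of pairwise distinct projective points:
  no three on a line, no six on a conic.\<close>
definition in_general_position :: "('a::field \<times> 'a \<times> 'a) set \<Rightarrow> bool" where
  "in_general_position B \<longleftrightarrow>
     (\<forall>S\<subseteq>B. card S = 3 \<longrightarrow> \<not> (\<exists>l. l \<noteq> (0,0,0) \<and> (\<forall>p\<in>S. on_line l p))) \<and>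
     (\<forall>S\<subseteq>B. card S = 6 \<longrightarrow> \<not> (\<exists>q. q \<noteq> (0,0,0,0,0,0) \<and> (\<forall>p\<in>S. on_conic q p)))"

end

theory Submission
  imports Defs
begin

text \<open>
  If three of the points (\<alpha>^3 : \<alpha> : 1) lie on the line a x + b y + c z = 0, the three
  roots are the roots of the cubic a t^3 + b t + c, which has no t^2 term, so they sum to 0.
  Likewise six points on a conic give six roots of a sextic in t without t^5 term, so they
  sum to 0. On the other hand, if the Galois group contains all even permutations of the
  seven roots, no set T of at least three but not all roots has sum 0: for t, e, e' in T
  and u outside T, an automorphism acting as (t u)(e e') maps the sum of T to the sum of
  T - {t} \<union> {u}, so both sums vanish only if u = t.
\<close>

lemma separable_poly_not_square_dvd:
  fixes f :: "'a::field poly"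
  assumes "separable_poly f"
  shows "\<not> [:-a, 1:] ^ 2 dvd f"
proof
  assume "[:-a, 1:] ^ 2 dvd f"
  then obtain q where q: "f = [:-a, 1:] * ([:-a, 1:] * q)"
    by (metis dvdE mult.assoc power2_eq_square)
  have "[:-a, 1:] dvd pderiv f"
    unfolding q pderiv_mult by (meson dvd_add dvd_mult2 dvd_triv_left)
  moreover have "[:-a, 1:] dvd f"
    unfolding q by (rule dvd_triv_left)
  ultimately have "is_unit [:-a, 1:]"
    using assms unfolding separable_poly_def by (metis coprime_common_divisor)
  then show False by (simp add: is_unit_iff_degree)
qed

lemma card_root_set_separable:
  fixes f :: "'a::alg_closed_field poly"
  assumes "separable_poly f" "f \<noteq> 0"
  shows "card (root_set f) = degree f"
proof -
  obtain A where A: "size A = degree f" "f = smult (lead_coeff f) (\<Prod>x\<in>#A. [:-x, 1:])"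
    using alg_closed_imp_factorization[OF \<open>f \<noteq> 0\<close>] by blast
  have roots: "root_set f = set_mset A"
    using \<open>f \<noteq> 0\<close> by (subst A(2)) (auto simp: root_set_def poly_prod_mset image_iff)
  have count_le_1: "count A x \<le> 1" for x
  proof (rule ccontr)
    assume "\<not> count A x \<le> 1"
    then have "image_mset (\<lambda>x. [:-x, 1:]) {#x, x#} \<subseteq># image_mset (\<lambda>x. [:-x, 1:]) A"
      by (intro image_mset_subseteq_mono) (simp add: subseteq_mset_def)
    then have "[:-x, 1:] ^ 2 dvd (\<Prod>x\<in>#A. [:-x, 1:])"
      by (auto simp: power2_eq_square dest: prod_mset_subset_imp_dvd)
    then have "[:-x, 1:] ^ 2 dvd f"
      by (subst A(2)) (rule dvd_smult)
    with separable_poly_not_square_dvd[OF assms(1)] show False by blast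
  qed
  have "A = mset_set (set_mset A)"
  proof (rule multiset_eqI)
    show "count A x = count (mset_set (set_mset A)) x" for x
      using count_le_1[of x] by (auto simp: count_mset_set' le_Suc_eq simp flip: count_greater_zero_iff)
  qed
  then show ?thesis using roots A(1) by (metis size_mset_set)
qed

lemma degree_prod_linear_factors:
  fixes S :: "'a::idom set"
  shows "degree (\<Prod>s\<in>S. [:-s, 1:]) = card S"
  by (subst degree_prod_sum_eq) auto

lemma coeff_prod_linear_factors_card:
  fixes S :: "'a::idom set"
  shows "coeff (\<Prod>s\<in>S. [:-s, 1:]) (card S) = 1"
  using lead_coeff_prod[of "\<lambda>s. [:-s, 1:]" S] by (simp add: degree_prod_linear_factors)

lemma coeff_prod_linear_factors_pred_card:
  fixes S :: "'a::idom set"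
  assumes "finite S" "S \<noteq> {}"
  shows "coeff (\<Prod>s\<in>S. [:-s, 1:]) (card S - 1) = - \<Sum>S"
  using assms
proof (induction S rule: finite_ne_induct)
  case (singleton x)
  then show ?case by simp
next
  case (insert x F)
  then obtain m where m: "card F = Suc m"
    by (metis card_0_eq not0_implies_Suc)
  define P where "P = (\<Prod>s\<in>F. [:-s, 1:])"
  have "coeff P (card F) = 1"
    unfolding P_def by (rule coeff_prod_linear_factors_card)
  then have "coeff ([:-x, 1:] * P) (card F) = coeff P m - x"
    by (simp add: m)
  then show ?case
    using insert m by (simp add: P_def)
qed

lemma poly_eq_smult_prod_linear_factors:
  fixes g :: "'a::idom poly"
  assumes "finite S" "degree g \<le> card S" "\<And>s. s \<in> S \<Longrightarrow> poly g s = 0"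
  shows "g = smult (coeff g (card S)) (\<Prod>s\<in>S. [:-s, 1:])"
  by (rule poly_eqI_degree_lead_coeff[where n = "card S" and A = S])
    (use assms in \<open>auto simp: degree_prod_linear_factors coeff_prod_linear_factors_card poly_prod\<close>)

lemma sum_roots_eq_0_if_subleading_coeff_eq_0:
  fixes g :: "'a::idom poly"
  assumes "g \<noteq> 0" "finite S" "S \<noteq> {}" "degree g \<le> card S"
    and "\<And>s. s \<in> S \<Longrightarrow> poly g s = 0" "coeff g (card S - 1) = 0"
  shows "\<Sum>S = 0"
proof -
  have g: "g = smult (coeff g (card S)) (\<Prod>s\<in>S. [:-s, 1:])"
    using assms by (intro poly_eq_smult_prod_linear_factors)
  with \<open>g \<noteq> 0\<close> have "coeff g (card S) \<noteq> 0"
    by (metis smult_eq_0_iff)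
  moreover have "coeff g (card S - 1) = coeff g (card S) * - \<Sum>S"
    using g coeff_smult coeff_prod_linear_factors_pred_card[OF assms(2,3)] by metis
  ultimately show ?thesis
    using assms(6) by simp
qed

lemma on_line_cubic_point_iff:
  "on_line (a, b, c) (x ^ 3, x, 1) \<longleftrightarrow> poly [:c, b, 0, a:] x = 0"
  by (simp add: on_line_def algebra_simps power3_eq_cube)

lemma on_conic_cubic_point_iff:
  "on_conic (c1, c2, c3, c4, c5, c6) (x ^ 3, x, 1) \<longleftrightarrow>
     poly [:c3, c6, c2, c5, c4, 0, c1:] x = 0"
  by (simp add: on_conic_def algebra_simps power2_eq_square power3_eq_cube)

lemma sum_eq_0_if_collinear:
  fixes T :: "'a::field set"
  assumes "card T = 3" "l \<noteq> (0, 0, 0)" "\<forall>x\<in>T. on_line l (x ^ 3, x, 1)"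
  shows "\<Sum>T = 0"
proof -
  obtain a b c where l: "l = (a, b, c)"
    by (cases l) auto
  show ?thesis
  proof (rule sum_roots_eq_0_if_subleading_coeff_eq_0)
    show "[:c, b, 0, a:] \<noteq> 0" "degree [:c, b, 0, a:] \<le> card T"
      using assms(1,2) by (auto simp: l)
    show "poly [:c, b, 0, a:] x = 0" if "x \<in> T" for x
      using assms(3) that by (simp add: l on_line_cubic_point_iff)
  qed (use assms(1) in \<open>auto intro: card_ge_0_finite simp: numeral_eq_Suc\<close>)
qed

lemma sum_eq_0_if_on_conic:
  fixes T :: "'a::field set"
  assumes "card T = 6" "q \<noteq> (0, 0, 0, 0, 0, 0)" "\<forall>x\<in>T. on_conic q (x ^ 3, x, 1)"
  shows "\<Sum>T = 0"
proof -
  obtain c1 c2 c3 c4 c5 c6 where q: "q = (c1, c2, c3, c4, c5, c6)"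
    by (cases q) auto
  show ?thesis
  proof (rule sum_roots_eq_0_if_subleading_coeff_eq_0)
    show "[:c3, c6, c2, c5, c4, 0, c1:] \<noteq> 0" "degree [:c3, c6, c2, c5, c4, 0, c1:] \<le> card T"
      using assms(1,2) by (auto simp: q)
    show "poly [:c3, c6, c2, c5, c4, 0, c1:] x = 0" if "x \<in> T" for x
      using assms(3) that by (simp add: q on_conic_cubic_point_iff)
  qed (use assms(1) in \<open>auto intro: card_ge_0_finite simp: numeral_eq_Suc\<close>)
qed

lemma in_general_position_cubic_points:
  fixes R :: "'a::field set"
  assumes "\<And>T. T \<subseteq> R \<Longrightarrow> card T \<in> {3, 6} \<Longrightarrow> \<Sum>T \<noteq> 0"
  shows "in_general_position ((\<lambda>\<alpha>. (\<alpha> ^ 3, \<alpha>, 1)) ` R)"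
proof -
  let ?P = "\<lambda>\<alpha>::'a. (\<alpha> ^ 3, \<alpha>, 1::'a)"
  have preimage: "\<exists>T\<subseteq>R. S = ?P ` T \<and> card T = card S" if "S \<subseteq> ?P ` R" for S
    using that by (auto simp: subset_image_inj card_image)
  show ?thesis
    unfolding in_general_position_def
  proof (intro conjI allI impI notI)
    fix S assume S: "S \<subseteq> ?P ` R" "card S = 3"
      and "\<exists>l. l \<noteq> (0, 0, 0) \<and> (\<forall>p\<in>S. on_line l p)"
    then obtain l where l: "l \<noteq> (0, 0, 0)" "\<forall>p\<in>S. on_line l p" by blast
    obtain T where T: "T \<subseteq> R" "S = ?P ` T" "card T = 3"
      using preimage[OF S(1)] S(2) by auto
    have "\<Sum>T = 0"
      using T(2,3) l by (intro sum_eq_0_if_collinear) auto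
    with assms T show False by simp
  next
    fix S assume S: "S \<subseteq> ?P ` R" "card S = 6"
      and "\<exists>q. q \<noteq> (0, 0, 0, 0, 0, 0) \<and> (\<forall>p\<in>S. on_conic q p)"
    then obtain q where q: "q \<noteq> (0, 0, 0, 0, 0, 0)" "\<forall>p\<in>S. on_conic q p" by blast
    obtain T where T: "T \<subseteq> R" "S = ?P ` T" "card T = 6"
      using preimage[OF S(1)] S(2) by auto
    have "\<Sum>T = 0"
      using T(2,3) q by (intro sum_eq_0_if_on_conic) auto
    with assms T show False by simp
  qed
qed

lemma sum_ne_0_if_even_perms_extend_additively:
  fixes R T :: "'a::ab_group_add set"
  assumes "finite R" "T \<subset> R" "3 \<le> card T"
    and even_perm_extends:
      "\<And>p. p permutes R \<Longrightarrow> evenperm p \<Longrightarrow> \<exists>\<sigma>. additive \<sigma> \<and> (\<forall>x\<in>R. \<sigma> x = p x)"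
  shows "\<Sum>T \<noteq> 0"
proof
  assume sum_T: "\<Sum>T = 0"
  have "finite T" using assms(1,2) finite_subset by blast
  obtain t where t: "t \<in> T" using assms(3) by fastforce
  obtain u where u: "u \<in> R" "u \<notin> T" using assms(2) by blast
  have "2 \<le> card (T - {t})" using assms(3) t \<open>finite T\<close> by simp
  then obtain E where "E \<subseteq> T - {t}" "card E = 2"
    by (rule obtain_subset_with_card_n)
  then obtain e e' where e: "e \<in> T - {t}" "e' \<in> T - {t}" "e \<noteq> e'"
    by (auto simp: card_2_iff)
  define p where "p = transpose t u \<circ> transpose e e'"
  have "p permutes R" "evenperm p"
    using assms(2) t u e unfolding p_def
    by (auto intro!: permutes_compose permutes_swap_id simp: evenperm_comp permutation_swap_id evenperm_swap)
  then obtain \<sigma> where \<sigma>: "additive \<sigma>" "\<forall>x\<in>R. \<sigma> x = p x"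
    using even_perm_extends by blast
  have p_T: "p ` T = insert u (T - {t})"
    using t u e unfolding p_def by (auto simp: transpose_def)
  have "0 = \<sigma> (\<Sum>T)"
    using sum_T additive.zero[OF \<sigma>(1)] by simp
  also have "\<dots> = (\<Sum>x\<in>T. \<sigma> x)"
    by (rule additive.sum[OF \<sigma>(1)])
  also have "\<dots> = (\<Sum>x\<in>T. p x)"
    using \<sigma>(2) assms(2) by (intro sum.cong) auto
  also have "\<dots> = \<Sum>(p ` T)"
    using \<open>p permutes R\<close> by (simp add: sum.reindex permutes_inj_on)
  also have "\<dots> = \<Sum>T - t + u"
    using p_T u t \<open>finite T\<close> by (simp add: sum_diff1)
  finally show False
    using sum_T t u by simp
qed

lemma field_aut_additive: "field_aut \<sigma> \<Longrightarrow> additive \<sigma>"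
  by (simp add: field_aut_def additive_def)

lemma even_perm_extends_if_alternating_subset_gal_group:
  assumes "{p. p permutes root_set f \<and> evenperm p} \<subseteq> gal_group K f"
    and "p permutes root_set f" "evenperm p"
  shows "\<exists>\<sigma>. additive \<sigma> \<and> (\<forall>x\<in>root_set f. \<sigma> x = p x)"
proof -
  have "p \<in> gal_group K f" using assms by blast
  then obtain \<sigma> where "field_aut \<sigma>" "p = (\<lambda>x. if x \<in> root_set f then \<sigma> x else x)"
    unfolding gal_group_def by blast
  then show ?thesis using field_aut_additive by auto
qed

theorem lemma1p3:
  fixes K :: "'a::alg_closed_field set" and f :: "'a poly"
  assumes "is_subfield K" and "algebraic_over K"
    and "perfect_subfield K" and "CHAR('a) \<noteq> 2"
    and "poly_over K f" and "separable_poly f" and "irreducible_over K f"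
    and "degree f = 7"
    and "gal_group K f = {p. p permutes root_set f}
         \<or> gal_group K f = {p. p permutes root_set f \<and> evenperm p}"
  shows "in_general_position ((\<lambda>\<alpha>. (\<alpha>^3, \<alpha>, 1)) ` root_set f)"
proof (rule in_general_position_cubic_points)
  fix T assume T: "T \<subseteq> root_set f" "card T \<in> {3, 6}"
  have "f \<noteq> 0" using assms(8) by auto
  then have card_roots: "card (root_set f) = 7"
    using card_root_set_separable assms(6,8) by metis
  have alternating: "{p. p permutes root_set f \<and> evenperm p} \<subseteq> gal_group K f"
    using assms(9) by blast
  show "\<Sum>T \<noteq> 0"
  proof (rule sum_ne_0_if_even_perms_extend_additively)
    show "finite (root_set f)" using card_roots by (intro card_ge_0_finite) simp
    show "T \<subset> root_set f" "3 \<le> card T" using T card_roots by auto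
  qed (rule even_perm_extends_if_alternating_subset_gal_group[OF alternating])
qed

end
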